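(* Let $(\mathcal{Y},\eta)$ be an $(n,m)$-voltage operator and let $\tau\in\operatorname{Aut}(\mathcal{Y})$ satisfy $\eta(W\tau)=\eta(W)$ for every $W\in\Pi(\mathcal{Y})$. Then for every $n$-premaniplex $\mathcal{X}$, the map $\tilde\tau:(x,y)\mapsto(x,y\tau)$ is an automorphism of $\mathcal{X}\rtimes_\eta\mathcal{Y}$; in particular $\tau$ has a lift to $\mathcal{X}\rtimes_\eta\mathcal{Y}$.
   Context: An $n$-premaniplex is an edge-coloured graph (semi-edges and parallel edges allowed) with colours $\{0,\dots,n-1\}$ such that every vertex (flag) is the start of exactly one dart of each colour, and for $|i-j|\ge2$ alternating $i,j$-paths of length 4 are closed; $x^i$ is the $i$-adjacent flag of $x$. $\mathcal{C}^n=\langle r_0,\dots,r_{n-1}\mid r_i^2,\ (r_ir_j)^2\ (|i-j|\ge2)\rangle$ acts on the left on flags by $r_ix=x^i$. Automorphisms (colour-preserving graph automorphisms) act on the right and map paths to paths, $W\mapsto W\tau$. For a flag $y$ of an $m$-premaniplex $\mathcal{Y}$ and $\omega\in\mathcal{C}^m$, $W_\omega(y)$ is the homotopy class of paths from $y$ whose colour sequence $i_1,\dots,i_k$ satisfies $r_{i_k}\cdots r_{i_1}=\omega$; these form the fundamental groupoid $\Pi(\mathcal{Y})$. A voltage assignment $\eta:\Pi(\mathcal{Y})\to\mathcal{C}^n$ satisfies $\eta(W_1W_2)=\eta(W_2)\eta(W_1)$; $(\mathcal{Y},\eta)$ is an $(n,m)$-voltage operator. $\mathcal{X}\rtimes_\eta\mathcal{Y}$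 has flags $\mathcal{X}\times\mathcal{Y}$ and $(x,y)^i=(\eta(W_{r_i}(y))x,r_iy)$, $i\in\{0,\dots,m-1\}$. An automorphism $\tau$ of $\mathcal{Y}$ lifts to $\mathcal{X}\rtimes_\eta\mathcal{Y}$ if there is $\tilde\tau\in\operatorname{Aut}(\mathcal{X}\rtimes_\eta\mathcal{Y})$ such that the $\mathcal{Y}$-coordinate of $(x,y)\tilde\tau$ is $y\tau$ for all $(x,y)$; $\tilde\tau$ is a lift of $\tau$. *)

theory Defs
  imports Main
begin

text \<open>Words over colours. A word [i1,...,ik] stands for the element
  r_ik ... r_i1 of the Coxeter group C^n (first letter acts first).
  The word for a product a b is therefore word(b) @ word(a).\<close>

definition is_word :: "nat \<Rightarrow> nat list \<Rightarrow> bool" where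
  "is_word n w \<longleftrightarrow> (\<forall>i\<in>set w. i < n)"

inductive cox_eq :: "nat \<Rightarrow> nat list \<Rightarrow> nat list \<Rightarrow> bool" for n where
  refl: "cox_eq n w w"
| sym: "cox_eq n u w \<Longrightarrow> cox_eq n w u"
| trans: "cox_eq n u v \<Longrightarrow> cox_eq n v w \<Longrightarrow> cox_eq n u w"
| invol: "i < n \<Longrightarrow> cox_eq n (u @ [i, i] @ v) (u @ v)"
| comm: "i < n \<Longrightarrow> j < n \<Longrightarrow> 2 \<le> \<bar>int i - int j\<bar> \<Longrightarrow>
           cox_eq n (u @ [i, j] @ v) (u @ [j, i] @ v)"

text \<open>An n-premaniplex: flag set F and for each colour i < n the i-adjacency
  involution adj i (fixed points are semi-edges).\<close>

definition premaniplex :: "nat \<Rightarrow> 'a set \<Rightarrow> (nat \<Rightarrow> 'a \<Rightarrow> 'a) \<Rightarrow> bool" where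
  "premaniplex n F adj \<longleftrightarrow>
     (\<forall>i<n. \<forall>x\<in>F. adj i x \<in> F \<and> adj i (adj i x) = x) \<and>
     (\<forall>i<n. \<forall>j<n. 2 \<le> \<bar>int i - int j\<bar> \<longrightarrow>
        (\<forall>x\<in>F. adj i (adj j (adj i (adj j x))) = x))"

definition act :: "(nat \<Rightarrow> 'a \<Rightarrow> 'a) \<Rightarrow> nat list \<Rightarrow> 'a \<Rightarrow> 'a" where
  "act adj w x = fold adj w x"

text \<open>Colour-preserving automorphisms (acting on the right, written as functions).\<close>

definition is_aut :: "nat \<Rightarrow> 'a set \<Rightarrow> (nat \<Rightarrow> 'a \<Rightarrow> 'a) \<Rightarrow> ('a \<Rightarrow> 'a) \<Rightarrow> bool" where
  "is_aut n F adj \<tau> \<longleftrightarrow> bij_betw \<tau> F F \<and> (\<forall>i<n. \<forall>x\<in>F. \<tau> (adj i x) = adj i (\<tau> x))"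

text \<open>Fundamental groupoid: the element W_\<omega>(y) is represented by the pair (y, w)
  with w a word for \<omega> (a colour sequence of a path from y); two such represent the
  same element iff the words are equal in C^m.  A voltage assignment eta y w
  (a word for an element of C^n) must be well defined on classes and satisfy
  eta(W1 W2) = eta(W2) eta(W1).\<close>

definition voltage_operator ::
  "nat \<Rightarrow> nat \<Rightarrow> 'y set \<Rightarrow> (nat \<Rightarrow> 'y \<Rightarrow> 'y) \<Rightarrow> ('y \<Rightarrow> nat list \<Rightarrow> nat list) \<Rightarrow> bool" where
  "voltage_operator n m FY adjY \<eta> \<longleftrightarrow>
     premaniplex m FY adjY \<and>
     (\<forall>y\<in>FY. \<forall>w. is_word m w \<longrightarrow> is_word n (\<eta> y w)) \<and>
     (\<forall>y\<in>FY. \<forall>w w'. is_word m w \<longrightarrow> is_word m w' \<longrightarrow> cox_eq m w w' \<longrightarrow>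
         cox_eq n (\<eta> y w) (\<eta> y w')) \<and>
     (\<forall>y\<in>FY. \<forall>w1 w2. is_word m w1 \<longrightarrow> is_word m w2 \<longrightarrow>
         cox_eq n (\<eta> y (w1 @ w2)) (\<eta> y w1 @ \<eta> (act adjY w1 y) w2))"

definition vprod_adj ::
  "(nat \<Rightarrow> 'x \<Rightarrow> 'x) \<Rightarrow> (nat \<Rightarrow> 'y \<Rightarrow> 'y) \<Rightarrow> ('y \<Rightarrow> nat list \<Rightarrow> nat list) \<Rightarrow>
   nat \<Rightarrow> 'x \<times> 'y \<Rightarrow> 'x \<times> 'y" where
  "vprod_adj adjX adjY \<eta> i p = (act adjX (\<eta> (snd p) [i]) (fst p), adjY i (snd p))"

definition has_lift ::
  "nat \<Rightarrow> 'x set \<Rightarrow> (nat \<Rightarrow> 'x \<Rightarrow> 'x) \<Rightarrow> 'y set \<Rightarrow> (nat \<Rightarrow> 'y \<Rightarrow> 'y) \<Rightarrow>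
   ('y \<Rightarrow> nat list \<Rightarrow> nat list) \<Rightarrow> ('y \<Rightarrow> 'y) \<Rightarrow> bool" where
  "has_lift m FX adjX FY adjY \<eta> \<tau> \<longleftrightarrow>
     (\<exists>\<sigma>. is_aut m (FX \<times> FY) (vprod_adj adjX adjY \<eta>) \<sigma> \<and>
          (\<forall>p\<in>FX \<times> FY. snd (\<sigma> p) = \<tau> (snd p)))"

end

theory Submission
  imports Defs
begin

text \<open>By the invariance of \<eta>, the i-edges at y and at y\<tau> carry voltages that are equal in
  C^n. Since the action of C^n on the flags of X depends only on the group element and not on
  the word representing it, the i-neighbours of (x, y) and (x, y\<tau>) have the same
  X-coordinate, so (x, y) \<mapsto> (x, y\<tau>) commutes with every adjacency.\<close>

lemma cox_eq_is_word_iff: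
  assumes "cox_eq n u v"
  shows "is_word n u \<longleftrightarrow> is_word n v"
proof -
  txt \<open>The relations only delete or swap letters below n, so the letters \<open>\<ge> n\<close> are invariant.\<close>
  have "filter (\<lambda>i. \<not> i < n) u = filter (\<lambda>i. \<not> i < n) v"
    using assms by (induction rule: cox_eq.induct) auto
  then show ?thesis
    unfolding is_word_def by (metis filter_empty_conv)
qed

lemma act_in_flags:
  assumes "premaniplex n F adj" "is_word n w" "x \<in> F"
  shows "act adj w x \<in> F"
  using assms(2,3) unfolding act_def
proof (induction w arbitrary: x)
  case (Cons i w)
  then show ?case using assms(1) by (auto simp: premaniplex_def is_word_def)
qed simp

lemma premaniplex_adj_involution:
  assumes "premaniplex n F adj" "i < n" "x \<in> F"
  shows "adj i (adj i x) = x"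
  using assms by (auto simp: premaniplex_def)

lemma premaniplex_adj_commute:
  assumes pm: "premaniplex n F adj" and "i < n" "j < n" "2 \<le> \<bar>int i - int j\<bar>" and "x \<in> F"
  shows "adj j (adj i x) = adj i (adj j x)"
proof -
  have closed: "\<And>k z. k < n \<Longrightarrow> z \<in> F \<Longrightarrow> adj k z \<in> F"
    using pm by (auto simp: premaniplex_def)
  define w where "w = adj j (adj i x)"
  have "w \<in> F"
    using assms closed by (simp add: w_def)
  have "adj j w = adj i x"
    using assms closed premaniplex_adj_involution[OF pm] by (simp add: w_def)
  then have "adj i (adj j (adj i (adj j w))) = adj i (adj j x)"
    using assms premaniplex_adj_involution[OF pm] by simp
  moreover have "adj i (adj j (adj i (adj j w))) = w"
    using pm assms \<open>w \<in> F\<close> by (auto simp: premaniplex_def)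
  ultimately show ?thesis
    by (simp add: w_def)
qed

lemma cox_eq_act:
  assumes pm: "premaniplex n F adj"
  shows "cox_eq n u v \<Longrightarrow> is_word n u \<Longrightarrow> x \<in> F \<Longrightarrow> act adj u x = act adj v x"
proof (induction rule: cox_eq.induct)
  case (sym u w)
  then show ?case using cox_eq_is_word_iff by (metis cox_eq.sym)
next
  case (trans u v w)
  then show ?case using cox_eq_is_word_iff by metis
next
  case (invol i u v)
  have "act adj u x \<in> F"
    using invol act_in_flags[OF pm] by (simp add: is_word_def)
  then show ?case
    using premaniplex_adj_involution[OF pm invol.hyps] by (simp add: act_def)
next
  case (comm i j u v)
  have "act adj u x \<in> F"
    using comm act_in_flags[OF pm] by (simp add: is_word_def)
  then show ?case
    using premaniplex_adj_commute[OF pm comm.hyps] by (simp add: act_def)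
qed simp

lemma is_aut_vprod_map_prod_id:
  assumes pmX: "premaniplex n FX adjX"
    and voltage_words: "\<forall>y\<in>FY. \<forall>i<m. is_word n (\<eta> y [i])"
    and aut: "is_aut m FY adjY \<tau>"
    and invariant: "\<forall>y\<in>FY. \<forall>i<m. cox_eq n (\<eta> (\<tau> y) [i]) (\<eta> y [i])"
  shows "is_aut m (FX \<times> FY) (vprod_adj adjX adjY \<eta>) (map_prod id \<tau>)"
proof -
  have bij: "bij_betw \<tau> FY FY" and commutes: "\<forall>i<m. \<forall>y\<in>FY. \<tau> (adjY i y) = adjY i (\<tau> y)"
    using aut by (auto simp: is_aut_def)
  have same_voltage_action: "act adjX (\<eta> (\<tau> y) [i]) x = act adjX (\<eta> y [i]) x"
    if "i < m" "y \<in> FY" "x \<in> FX" for i y x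
  proof -
    have "\<tau> y \<in> FY" using bij that(2) by (auto simp: bij_betw_def)
    then show ?thesis
      using cox_eq_act[OF pmX] invariant voltage_words that by blast
  qed
  have "bij_betw (map_prod id \<tau>) (FX \<times> FY) (FX \<times> FY)"
    using bij_betw_map_prod[OF bij_betw_id[of FX] bij] by simp
  then show ?thesis
    unfolding is_aut_def using same_voltage_action commutes by (auto simp: vprod_adj_def)
qed

theorem theorem6p1:
  fixes n m :: nat
    and FY :: "'y set" and adjY :: "nat \<Rightarrow> 'y \<Rightarrow> 'y"
    and \<eta> :: "'y \<Rightarrow> nat list \<Rightarrow> nat list" and \<tau> :: "'y \<Rightarrow> 'y"
    and FX :: "'x set" and adjX :: "nat \<Rightarrow> 'x \<Rightarrow> 'x"
  assumes "voltage_operator n m FY adjY \<eta>"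
    and "is_aut m FY adjY \<tau>"
    and "\<forall>y\<in>FY. \<forall>w. is_word m w \<longrightarrow> cox_eq n (\<eta> (\<tau> y) w) (\<eta> y w)"
    and "premaniplex n FX adjX"
  shows "is_aut m (FX \<times> FY) (vprod_adj adjX adjY \<eta>) (\<lambda>(x, y). (x, \<tau> y))
         \<and> has_lift m FX adjX FY adjY \<eta> \<tau>"
proof -
  have letters: "is_word m [i]" if "i < m" for i
    using that by (simp add: is_word_def)
  have lift_is_map_prod: "(\<lambda>(x, y). (x, \<tau> y)) = map_prod id \<tau>"
    by auto
  have lift: "is_aut m (FX \<times> FY) (vprod_adj adjX adjY \<eta>) (\<lambda>(x, y). (x, \<tau> y))"
    unfolding lift_is_map_prod
  proof (rule is_aut_vprod_map_prod_id[OF assms(4) _ assms(2)])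
    show "\<forall>y\<in>FY. \<forall>i<m. is_word n (\<eta> y [i])"
      using assms(1) letters by (simp add: voltage_operator_def)
    show "\<forall>y\<in>FY. \<forall>i<m. cox_eq n (\<eta> (\<tau> y) [i]) (\<eta> y [i])"
      using assms(3) letters by blast
  qed
  moreover have "has_lift m FX adjX FY adjY \<eta> \<tau>"
    unfolding has_lift_def using lift by (intro exI[of _ "\<lambda>(x, y). (x, \<tau> y)"]) auto
  ultimately show ?thesis ..
qed

end
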